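(* (Dual SDP upper bound for the $\ell_\infty$-FGL of multi-layer networks.) Let $d\ge2$, let $n_1,\dots,n_d\ge1$, let $W_i\in\mathbb{R}^{n_{i+1}\times n_i}$ for $i\in[d-1]$, let $u\in\mathbb{R}^{1\times n_d}$, and let $a\le b$ be real. Let $\zeta\in\mathbb{R}$ and $\Lambda_i\in\mathbb{R}^{n_i}_+$ for $i\in[d]$, and put $T_i=\mathrm{diag}(\Lambda_i)$. Let $M$ be the symmetric block matrix with block rows/columns indexed by $0,1,\dots,d$ of sizes $1,n_1,\dots,n_d$, whose nonzero blocks are: - $M_{00}=\sum_{k=1}^{n_1}(\Lambda_1)_k-\zeta$, $M_{0d}=u$, $M_{d0}=u^T$; - $M_{11}=-T_1-2ab\,W_1^TT_2W_1$; - $M_{ii}=-2T_i-2ab\,W_i^TT_{i+1}W_i$ for $2\le i\le d-1$; - $M_{dd}=-2T_d$; - $M_{i,i+1}=(a+b)W_i^TT_{i+1}$ and $M_{i+1,i}=(a+b)T_{i+1}W_i$ for $1\le i\le d-1$ (when $d=2$, the blocks $M_{0d}$ and $M_{d0}$ are added to the listed ones; all other blocks are zero). If $M\preceq0$, then $$\frac{\zeta}{2}\;\ge\;\max_{v_i\in[a,b]^{n_{i+1}},\ i\in[d-1]}\big\|W_1^T\mathrm{diag}(v_1)W_2^T\mathrm{diag}(v_2)\cdots W_{d-1}^T\mathrm{diag}(v_{d-1})u^T\big\|_1 .$$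
   Context: $\mathrm{diag}(v)$ is the diagonal matrix with diagonal $v$; $P\preceq0$ means $-P$ is positive semidefinite; $\mathbb{R}_+=[0,\infty)$. The right-hand side is the $\ell_\infty$ formal global Lipschitz constant of the network $x\mapsto u\,\sigma(W_{d-1}\cdots\sigma(W_1x))$ whose activation $\sigma$ has derivative in $[a,b]$ (for ReLU, $a=0,b=1$): the maximum $\ell_1$-norm of the formal gradient when every activation derivative is treated as an independent value in $[a,b]$. *)

theory Defs
  imports "HOL-Analysis.Analysis"
begin

(* Conventions: layer widths n :: nat => nat (n i for i = 1..d);
   W i r c = (W_i)_{r,c}, r < n (Suc i), c < n i, for i = 1..d-1;
   u c = u_{1,c}, c < n d;  Lam i k = (Lambda_i)_k, k < n i, i = 1..d;
   v i k = (v_i)_k, k < n (Suc i), i = 1..d-1.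
   Matrices are functions nat => nat => real with explicit bounds. *)

definition blk_size :: "(nat \<Rightarrow> nat) \<Rightarrow> nat \<Rightarrow> nat" where
  "blk_size n i = (if i = 0 then 1 else n i)"

definition blk_off :: "(nat \<Rightarrow> nat) \<Rightarrow> nat \<Rightarrow> nat" where
  "blk_off n i = (\<Sum>j<i. blk_size n j)"

definition tot_dim :: "(nat \<Rightarrow> nat) \<Rightarrow> nat \<Rightarrow> nat" where
  "tot_dim n d = blk_off n (Suc d)"

definition blk_of :: "(nat \<Rightarrow> nat) \<Rightarrow> nat \<Rightarrow> nat \<Rightarrow> nat" where
  "blk_of n d p = (THE i. i \<le> d \<and> blk_off n i \<le> p \<and> p < blk_off n (Suc i))"

definition M_block :: "nat \<Rightarrow> (nat \<Rightarrow> nat) \<Rightarrow> (nat \<Rightarrow> nat \<Rightarrow> nat \<Rightarrow> real) \<Rightarrow>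
    (nat \<Rightarrow> real) \<Rightarrow> real \<Rightarrow> real \<Rightarrow> real \<Rightarrow> (nat \<Rightarrow> nat \<Rightarrow> real) \<Rightarrow>
    nat \<Rightarrow> nat \<Rightarrow> nat \<Rightarrow> nat \<Rightarrow> real" where
  "M_block d n W u a b \<zeta> Lam i j r c =
    (if i = 0 \<and> j = 0 then (\<Sum>k<n 1. Lam 1 k) - \<zeta>
     else if i = 0 \<and> j = d then u c
     else if i = d \<and> j = 0 then u r
     else if i = 1 \<and> j = 1 then
       - (if r = c then Lam 1 r else 0)
       - 2 * a * b * (\<Sum>k<n 2. W 1 k r * Lam 2 k * W 1 k c)
     else if 2 \<le> i \<and> i \<le> d - 1 \<and> j = i then
       - 2 * (if r = c then Lam i r else 0)
       - 2 * a * b * (\<Sum>k<n (Suc i). W i k r * Lam (Suc i) k * W i k c)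
     else if i = d \<and> j = d then - 2 * (if r = c then Lam d r else 0)
     else if 1 \<le> i \<and> i \<le> d - 1 \<and> j = Suc i then (a + b) * W i c r * Lam (Suc i) c
     else if 1 \<le> j \<and> j \<le> d - 1 \<and> i = Suc j then (a + b) * Lam i r * W j r c
     else 0)"

definition M_mat :: "nat \<Rightarrow> (nat \<Rightarrow> nat) \<Rightarrow> (nat \<Rightarrow> nat \<Rightarrow> nat \<Rightarrow> real) \<Rightarrow>
    (nat \<Rightarrow> real) \<Rightarrow> real \<Rightarrow> real \<Rightarrow> real \<Rightarrow> (nat \<Rightarrow> nat \<Rightarrow> real) \<Rightarrow>
    nat \<Rightarrow> nat \<Rightarrow> real" where
  "M_mat d n W u a b \<zeta> Lam p q =
    (let i = blk_of n d p; j = blk_of n d q in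
     M_block d n W u a b \<zeta> Lam i j (p - blk_off n i) (q - blk_off n j))"

definition neg_semidef :: "nat \<Rightarrow> (nat \<Rightarrow> nat \<Rightarrow> real) \<Rightarrow> bool" where
  "neg_semidef N P \<longleftrightarrow> (\<forall>x::nat \<Rightarrow> real. (\<Sum>p<N. \<Sum>q<N. x p * (- P p q) * x q) \<ge> 0)"

(* back m = W_(d-m)^T diag(v_(d-m)) ... W_(d-1)^T diag(v_(d-1)) u^T, a vector of layer d-m *)
fun back_grad :: "nat \<Rightarrow> (nat \<Rightarrow> nat) \<Rightarrow> (nat \<Rightarrow> nat \<Rightarrow> nat \<Rightarrow> real) \<Rightarrow>
    (nat \<Rightarrow> nat \<Rightarrow> real) \<Rightarrow> (nat \<Rightarrow> real) \<Rightarrow> nat \<Rightarrow> nat \<Rightarrow> real" where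
  "back_grad d n W v u 0 = u"
| "back_grad d n W v u (Suc m) =
     (\<lambda>c. \<Sum>r<n (d - m). W (d - m - 1) r c * v (d - m - 1) r * back_grad d n W v u m r)"

definition formal_grad_l1 :: "nat \<Rightarrow> (nat \<Rightarrow> nat) \<Rightarrow> (nat \<Rightarrow> nat \<Rightarrow> nat \<Rightarrow> real) \<Rightarrow>
    (nat \<Rightarrow> nat \<Rightarrow> real) \<Rightarrow> (nat \<Rightarrow> real) \<Rightarrow> real" where
  "formal_grad_l1 d n W v u = (\<Sum>c<n 1. \<bar>back_grad d n W v u (d - 1) c\<bar>)"

end

theory Submission
  imports Defs
begin

text \<open>Test \<open>M \<preceq> 0\<close> on the block vector \<open>z = (1, s, z\<^sub>2, \<dots>, z\<^sub>d)\<close>, where \<open>s\<close> is the sign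
  vector of the formal gradient \<open>g\<close> and \<open>z\<^sub>i\<^sub>+\<^sub>1 = diag(v\<^sub>i) W\<^sub>i z\<^sub>i\<close> propagates \<open>s\<close> forward
  through the linearised network. Forward and backward propagation are adjoint, so
  \<open>u z\<^sub>d = g \<bullet> s = \<parallel>g\<parallel>\<^sub>1\<close>. Splitting \<open>M\<close> into a top part and one part per layer, the top
  part contributes \<open>2\<parallel>g\<parallel>\<^sub>1 - \<zeta>\<close> (because \<open>s\<^sub>k\<^sup>2 = 1\<close>), while layer \<open>i\<close> contributes
  \<open>2 \<Sum>\<^sub>k (\<Lambda>\<^sub>i\<^sub>+\<^sub>1)\<^sub>k (z\<^sub>i\<^sub>+\<^sub>1 - a y)\<^sub>k (b y - z\<^sub>i\<^sub>+\<^sub>1)\<^sub>k\<close> with \<open>y = W\<^sub>i z\<^sub>i\<close>, which is nonnegative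
  since each \<open>(z\<^sub>i\<^sub>+\<^sub>1)\<^sub>k\<close> is a multiple of \<open>y\<^sub>k\<close> by a factor in \<open>[a, b]\<close>.
  Hence \<open>0 \<ge> z\<^sup>T M z \<ge> 2\<parallel>g\<parallel>\<^sub>1 - \<zeta>\<close>.\<close>

lemma quad_form_diag:
  "(\<Sum>r<(N::nat). \<Sum>c<N. x r * (\<alpha> * (if r = c then L r else 0)) * x c)
    = \<alpha> * (\<Sum>r<N. L r * (x r)\<^sup>2 :: real)"
proof -
  have "(\<Sum>c<N. x r * (\<alpha> * (if r = c then L r else 0)) * x c) = \<alpha> * (L r * (x r)\<^sup>2)"
    if "r < N" for r
  proof -
    have "(\<Sum>c<N. x r * (\<alpha> * (if r = c then L r else 0)) * x c)
        = (\<Sum>c<N. if r = c then \<alpha> * (L r * (x r)\<^sup>2) else 0)"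
      by (intro sum.cong) (auto simp: power2_eq_square)
    also have "\<dots> = \<alpha> * (L r * (x r)\<^sup>2)"
      using that by simp
    finally show ?thesis .
  qed
  then show ?thesis by (simp add: sum_distrib_left)
qed

lemma quad_form_gram:
  "(\<Sum>r<(N::nat). \<Sum>c<N. x r * (\<alpha> * (\<Sum>k<(K::nat). W k r * L k * W k c)) * x c)
    = \<alpha> * (\<Sum>k<K. L k * (\<Sum>c<N. W k c * x c)\<^sup>2 :: real)"
  by (simp add: power2_eq_square sum_product sum_distrib_left sum_distrib_right algebra_simps
      sum.swap[of _ "{..<K}"])

lemma bilinear_form_mat_transpose_diag:
  "(\<Sum>r<(N::nat). \<Sum>c<(K::nat). x r * (\<alpha> * W c r * L c) * w c)
    = \<alpha> * (\<Sum>c<K. L c * (\<Sum>r<N. W c r * x r) * w c :: real)"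
  by (simp add: sum_distrib_left sum_distrib_right algebra_simps sum.swap[of _ "{..<K}"])

lemma bilinear_form_diag_mat:
  "(\<Sum>r<(K::nat). \<Sum>c<(N::nat). w r * (\<alpha> * L r * W r c) * x c)
    = \<alpha> * (\<Sum>r<K. L r * (\<Sum>c<N. W r c * x c) * w r :: real)"
  by (simp add: sum_distrib_left sum_distrib_right algebra_simps)

lemma sector_product_nonneg:
  fixes a b v y :: real
  assumes "a \<le> v" "v \<le> b"
  shows "0 \<le> (v * y - a * y) * (b * y - v * y)"
proof -
  have "(v * y - a * y) * (b * y - v * y) = y\<^sup>2 * ((v - a) * (b - v))"
    by (simp add: power2_eq_square algebra_simps)
  then show ?thesis using assms by simp
qed

lemma sum_lessThan_add: "(\<Sum>p<m + k. g p) = (\<Sum>p<(m::nat). g p) + (\<Sum>r<k. g (m + r))"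
  by (induction k) (simp_all add: add.assoc)

lemma blk_off_Suc: "blk_off n (Suc i) = blk_off n i + blk_size n i"
  by (simp add: blk_off_def)

lemma blk_off_mono: "i \<le> j \<Longrightarrow> blk_off n i \<le> blk_off n j"
  by (induction j rule: dec_induct) (auto simp: blk_off_Suc)

lemma blk_of_blk_off_add:
  assumes "i \<le> d" "r < blk_size n i"
  shows "blk_of n d (blk_off n i + r) = i"
  unfolding blk_of_def
proof (rule the_equality)
  show "i \<le> d \<and> blk_off n i \<le> blk_off n i + r \<and> blk_off n i + r < blk_off n (Suc i)"
    using assms by (simp add: blk_off_Suc)
next
  fix j assume j: "j \<le> d \<and> blk_off n j \<le> blk_off n i + r \<and> blk_off n i + r < blk_off n (Suc j)"
  show "j = i"
  proof (rule ccontr)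
    assume "j \<noteq> i"
    then consider "Suc j \<le> i" | "Suc i \<le> j" by linarith
    then show False
    proof cases
      case 1
      then have "blk_off n (Suc j) \<le> blk_off n i" by (rule blk_off_mono)
      with j show False by linarith
    next
      case 2
      then have "blk_off n (Suc i) \<le> blk_off n j" by (rule blk_off_mono)
      with j assms show False by (simp add: blk_off_Suc)
    qed
  qed
qed

lemma sum_lessThan_blk_off:
  "(\<Sum>p<blk_off n m. g p) = (\<Sum>i<m. \<Sum>r<blk_size n i. g (blk_off n i + r))"
  by (induction m) (simp_all add: blk_off_Suc sum_lessThan_add, simp add: blk_off_def)

definition block_form :: "(nat \<Rightarrow> nat) \<Rightarrow> nat \<Rightarrow> (nat \<Rightarrow> nat \<Rightarrow> nat \<Rightarrow> nat \<Rightarrow> real) \<Rightarrow>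
    (nat \<Rightarrow> nat \<Rightarrow> real) \<Rightarrow> real" where
  "block_form n d B z =
    (\<Sum>i\<le>d. \<Sum>j\<le>d. \<Sum>r<blk_size n i. \<Sum>c<blk_size n j. z i r * B i j r c * z j c)"

definition flatten_blocks :: "(nat \<Rightarrow> nat) \<Rightarrow> nat \<Rightarrow> (nat \<Rightarrow> nat \<Rightarrow> nat \<Rightarrow> nat \<Rightarrow> 'a) \<Rightarrow>
    nat \<Rightarrow> nat \<Rightarrow> 'a" where
  "flatten_blocks n d B p q =
    B (blk_of n d p) (blk_of n d q) (p - blk_off n (blk_of n d p)) (q - blk_off n (blk_of n d q))"

lemma M_mat_flatten_blocks: "M_mat d n W u a b \<zeta> Lam = flatten_blocks n d (M_block d n W u a b \<zeta> Lam)"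
  by (simp add: fun_eq_iff M_mat_def flatten_blocks_def Let_def)

lemma neg_semidef_imp_block_form_nonpos:
  assumes "neg_semidef (tot_dim n d) (flatten_blocks n d B)"
  shows "block_form n d B z \<le> 0"
proof -
  define x where "x p = z (blk_of n d p) (p - blk_off n (blk_of n d p))" for p
  have "(\<Sum>p<tot_dim n d. \<Sum>q<tot_dim n d. x p * flatten_blocks n d B p q * x q)
      = (\<Sum>i\<le>d. \<Sum>r<blk_size n i. \<Sum>j\<le>d. \<Sum>c<blk_size n j. z i r * B i j r c * z j c)"
    by (simp add: tot_dim_def sum_lessThan_blk_off lessThan_Suc_atMost x_def flatten_blocks_def
        blk_of_blk_off_add)
  also have "\<dots> = block_form n d B z"
    unfolding block_form_def by (intro sum.cong refl sum.swap)
  moreover have "0 \<le> (\<Sum>p<tot_dim n d. \<Sum>q<tot_dim n d. x p * - flatten_blocks n d B p q * x q)"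
    using assms unfolding neg_semidef_def by blast
  ultimately show ?thesis
    by (simp add: sum_negf)
qed

lemma block_form_add:
  "block_form n d (\<lambda>i j r c. B i j r c + C i j r c) z = block_form n d B z + block_form n d C z"
  by (simp add: block_form_def algebra_simps sum.distrib)

lemma block_form_sum:
  "block_form n d (\<lambda>i j r c. \<Sum>l\<in>L. B l i j r c) z = (\<Sum>l\<in>L. block_form n d (B l) z)"
  by (simp add: block_form_def sum_distrib_left sum_distrib_right sum.swap[of _ L])

lemma block_form_support:
  assumes "K \<subseteq> {..d}" and "\<And>i j r c. i \<notin> K \<or> j \<notin> K \<Longrightarrow> B i j r c = 0"
  shows "block_form n d B z =
    (\<Sum>i\<in>K. \<Sum>j\<in>K. \<Sum>r<blk_size n i. \<Sum>c<blk_size n j. z i r * B i j r c * z j c)"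
proof -
  have "(\<Sum>j\<le>d. \<Sum>r<blk_size n i. \<Sum>c<blk_size n j. z i r * B i j r c * z j c)
      = (\<Sum>j\<in>K. \<Sum>r<blk_size n i. \<Sum>c<blk_size n j. z i r * B i j r c * z j c)" for i
    by (rule sum.mono_neutral_right) (use assms in auto)
  then have "block_form n d B z
      = (\<Sum>i\<le>d. \<Sum>j\<in>K. \<Sum>r<blk_size n i. \<Sum>c<blk_size n j. z i r * B i j r c * z j c)"
    by (simp add: block_form_def)
  also have "\<dots> = (\<Sum>i\<in>K. \<Sum>j\<in>K. \<Sum>r<blk_size n i. \<Sum>c<blk_size n j. z i r * B i j r c * z j c)"
    by (rule sum.mono_neutral_right) (use assms in auto)
  finally show ?thesis .
qed

definition mat_vec :: "nat \<Rightarrow> (nat \<Rightarrow> nat \<Rightarrow> real) \<Rightarrow> (nat \<Rightarrow> real) \<Rightarrow> nat \<Rightarrow> real" where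
  "mat_vec N A x k = (\<Sum>c<N. A k c * x c)"

definition top_block :: "nat \<Rightarrow> (nat \<Rightarrow> nat) \<Rightarrow> (nat \<Rightarrow> real) \<Rightarrow> real \<Rightarrow> (nat \<Rightarrow> nat \<Rightarrow> real) \<Rightarrow>
    nat \<Rightarrow> nat \<Rightarrow> nat \<Rightarrow> nat \<Rightarrow> real" where
  "top_block d n u \<zeta> Lam i j r c =
     (if i = 0 \<and> j = 0 then (\<Sum>k<n 1. Lam 1 k) - \<zeta> else 0)
   + (if i = 0 \<and> j = d then u c else 0)
   + (if i = d \<and> j = 0 then u r else 0)
   + (if i = 1 \<and> j = 1 then - (if r = c then Lam 1 r else 0) else 0)"

text \<open>\<open>M\<close> is \<open>top_block\<close> plus the sum of the \<open>layer_block l\<close>, \<open>1 \<le> l < d\<close>: layer \<open>l\<close> carries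
  every entry of \<open>M\<close> involving \<open>T\<^sub>l\<^sub>+\<^sub>1\<close>, so the diagonal block \<open>M\<^sub>i\<^sub>i\<close> is shared between layers
  \<open>i - 1\<close> and \<open>i\<close>.\<close>

definition layer_block :: "(nat \<Rightarrow> nat) \<Rightarrow> (nat \<Rightarrow> nat \<Rightarrow> nat \<Rightarrow> real) \<Rightarrow> real \<Rightarrow> real \<Rightarrow>
    (nat \<Rightarrow> nat \<Rightarrow> real) \<Rightarrow> nat \<Rightarrow> nat \<Rightarrow> nat \<Rightarrow> nat \<Rightarrow> nat \<Rightarrow> real" where
  "layer_block n W a b Lam l i j r c =
     (if i = l \<and> j = l then - 2 * a * b * (\<Sum>k<n (Suc l). W l k r * Lam (Suc l) k * W l k c)
      else 0)
   + (if i = l \<and> j = Suc l then (a + b) * W l c r * Lam (Suc l) c else 0)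
   + (if i = Suc l \<and> j = l then (a + b) * Lam (Suc l) r * W l r c else 0)
   + (if i = Suc l \<and> j = Suc l then - 2 * (if r = c then Lam (Suc l) r else 0) else 0)"

lemma sum_if_eq_conj:
  "finite A \<Longrightarrow> (\<Sum>l\<in>A. if i = l \<and> Q l then f l else 0) = (if i \<in> A \<and> Q i then f i else 0)"
proof -
  assume "finite A"
  have "(\<Sum>l\<in>A. if i = l \<and> Q l then f l else 0)
      = (\<Sum>l\<in>A. if i = l then (if Q i then f i else 0) else 0)"
    by (intro sum.cong) auto
  with \<open>finite A\<close> show ?thesis by simp
qed

lemma sum_if_Suc_eq_conj:
  assumes "finite A"
  shows "(\<Sum>l\<in>A. if i = Suc l \<and> Q l then f l else 0)
    = (if 0 < i \<and> i - 1 \<in> A \<and> Q (i - 1) then f (i - 1) else 0)"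
proof -
  have "(\<Sum>l\<in>A. if i = Suc l \<and> Q l then f l else 0)
      = (\<Sum>l\<in>A. if i - 1 = l \<and> 0 < i \<and> Q l then f l else 0)"
    by (intro sum.cong) auto
  then show ?thesis
    using sum_if_eq_conj[OF assms, of "i - 1" "\<lambda>l. 0 < i \<and> Q l"] by auto
qed

lemma sum_layer_block:
  "(\<Sum>l\<in>{1..<d}. layer_block n W a b Lam l i j r c) =
     (if i \<in> {1..<d} \<and> j = i then - 2 * a * b * (\<Sum>k<n (Suc i). W i k r * Lam (Suc i) k * W i k c)
      else 0)
   + (if i \<in> {1..<d} \<and> j = Suc i then (a + b) * W i c r * Lam (Suc i) c else 0)
   + (if 0 < i \<and> i - 1 \<in> {1..<d} \<and> j = i - 1 then (a + b) * Lam i r * W j r c else 0)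
   + (if 0 < i \<and> i - 1 \<in> {1..<d} \<and> j = i then - 2 * (if r = c then Lam i r else 0)
      else 0)"
  unfolding layer_block_def
  by (simp only: sum.distrib sum_if_eq_conj sum_if_Suc_eq_conj finite_atLeastLessThan) auto

lemma M_block_decomposition:
  assumes "2 \<le> d"
  shows "M_block d n W u a b \<zeta> Lam i j r c
    = top_block d n u \<zeta> Lam i j r c + (\<Sum>l\<in>{1..<d}. layer_block n W a b Lam l i j r c)"
proof -
  consider "i = 0" | "0 < i" "j = 0" | "i = 1" "j = 1" | "2 \<le> i" "i < d" "j = i" | "i = d" "j = d"
    | "d < i" "j = i" | "0 < i" "j = Suc i" | "0 < j" "i = Suc j"
    | "0 < i" "0 < j" "j \<noteq> i" "j \<noteq> Suc i" "i \<noteq> Suc j"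
    by linarith
  then show ?thesis
    unfolding sum_layer_block
    by cases (use assms in \<open>auto simp: M_block_def top_block_def numeral_2_eq_2\<close>)
qed

lemma block_form_M_block:
  assumes "2 \<le> d"
  shows "block_form n d (M_block d n W u a b \<zeta> Lam) z =
    block_form n d (top_block d n u \<zeta> Lam) z
    + (\<Sum>l\<in>{1..<d}. block_form n d (layer_block n W a b Lam l) z)"
proof -
  have "M_block d n W u a b \<zeta> Lam = (\<lambda>i j r c.
      top_block d n u \<zeta> Lam i j r c + (\<Sum>l\<in>{1..<d}. layer_block n W a b Lam l i j r c))"
    by (simp add: fun_eq_iff M_block_decomposition[OF assms])
  then show ?thesis
    by (simp add: block_form_add block_form_sum)
qed

lemma block_form_layer_block:
  fixes n :: "nat \<Rightarrow> nat" and W :: "nat \<Rightarrow> nat \<Rightarrow> nat \<Rightarrow> real" and z :: "nat \<Rightarrow> nat \<Rightarrow> real"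
  assumes "1 \<le> l" "l < d"
  defines "y \<equiv> mat_vec (n l) (W l) (z l)"
  shows "block_form n d (layer_block n W a b Lam l) z =
    2 * (\<Sum>k<n (Suc l). Lam (Suc l) k * (z (Suc l) k - a * y k) * (b * y k - z (Suc l) k))"
proof -
  let ?B = "layer_block n W a b Lam l"
  let ?w = "z (Suc l)"
  have "block_form n d ?B z =
      (\<Sum>r<n l. \<Sum>c<n l. z l r * ?B l l r c * z l c)
    + (\<Sum>r<n l. \<Sum>c<n (Suc l). z l r * ?B l (Suc l) r c * ?w c)
    + (\<Sum>r<n (Suc l). \<Sum>c<n l. ?w r * ?B (Suc l) l r c * z l c)
    + (\<Sum>r<n (Suc l). \<Sum>c<n (Suc l). ?w r * ?B (Suc l) (Suc l) r c * ?w c)"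
    using assms(1,2)
    by (subst block_form_support[where K = "{l, Suc l}"]) (auto simp: layer_block_def blk_size_def)
  also have "\<dots> = - 2 * a * b * (\<Sum>k<n (Suc l). Lam (Suc l) k * (y k)\<^sup>2)
    + (a + b) * (\<Sum>k<n (Suc l). Lam (Suc l) k * y k * ?w k)
    + (a + b) * (\<Sum>k<n (Suc l). Lam (Suc l) k * y k * ?w k)
    + - 2 * (\<Sum>k<n (Suc l). Lam (Suc l) k * (?w k)\<^sup>2)"
  proof -
    have "(\<Sum>r<n l. \<Sum>c<n l. z l r * ?B l l r c * z l c)
        = - 2 * a * b * (\<Sum>k<n (Suc l). Lam (Suc l) k * (y k)\<^sup>2)"
      using quad_form_gram[where N = "n l" and x = "z l" and \<alpha> = "- 2 * a * b" and K = "n (Suc l)"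
          and W = "W l" and L = "Lam (Suc l)"]
      by (simp add: layer_block_def y_def mat_vec_def)
    moreover have "(\<Sum>r<n l. \<Sum>c<n (Suc l). z l r * ?B l (Suc l) r c * ?w c)
        = (a + b) * (\<Sum>k<n (Suc l). Lam (Suc l) k * y k * ?w k)"
      using bilinear_form_mat_transpose_diag[where N = "n l" and K = "n (Suc l)" and x = "z l"
          and \<alpha> = "a + b" and W = "W l" and L = "Lam (Suc l)" and w = ?w]
      by (simp add: layer_block_def y_def mat_vec_def)
    moreover have "(\<Sum>r<n (Suc l). \<Sum>c<n l. ?w r * ?B (Suc l) l r c * z l c)
        = (a + b) * (\<Sum>k<n (Suc l). Lam (Suc l) k * y k * ?w k)"
      using bilinear_form_diag_mat[where K = "n (Suc l)" and N = "n l" and w = ?w and \<alpha> = "a + b"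
          and L = "Lam (Suc l)" and W = "W l" and x = "z l"]
      by (simp add: layer_block_def y_def mat_vec_def)
    moreover have "(\<Sum>r<n (Suc l). \<Sum>c<n (Suc l). ?w r * ?B (Suc l) (Suc l) r c * ?w c)
        = - 2 * (\<Sum>k<n (Suc l). Lam (Suc l) k * (?w k)\<^sup>2)"
      using quad_form_diag[where N = "n (Suc l)" and x = ?w and \<alpha> = "- 2" and L = "Lam (Suc l)"]
      by (simp add: layer_block_def)
    ultimately show ?thesis by simp
  qed
  also have "\<dots> = 2 * (\<Sum>k<n (Suc l). Lam (Suc l) k * (?w k - a * y k) * (b * y k - ?w k))"
    by (simp add: sum_distrib_left algebra_simps power2_eq_square flip: sum.distrib sum_subtractf)
  finally show ?thesis .
qed

lemma block_form_top_block:
  assumes "2 \<le> d" "z 0 0 = 1"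
  shows "block_form n d (top_block d n u \<zeta> Lam) z =
    (\<Sum>k<n 1. Lam 1 k * (1 - (z 1 k)\<^sup>2)) - \<zeta> + 2 * (\<Sum>c<n d. u c * z d c)"
proof -
  let ?B = "top_block d n u \<zeta> Lam"
  have "block_form n d ?B z = z 0 0 * ?B 0 0 0 0 * z 0 0
    + (\<Sum>c<n d. z 0 0 * ?B 0 d 0 c * z d c) + (\<Sum>r<n d. z d r * ?B d 0 r 0 * z 0 0)
    + (\<Sum>r<n 1. \<Sum>c<n 1. z 1 r * ?B 1 1 r c * z 1 c)"
    using assms(1)
    by (subst block_form_support[where K = "{0, 1, d}"]) (auto simp: top_block_def blk_size_def)
  also have "\<dots> = (\<Sum>k<n 1. Lam 1 k) - \<zeta> + 2 * (\<Sum>c<n d. u c * z d c)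
      - (\<Sum>k<n 1. Lam 1 k * (z 1 k)\<^sup>2)"
    using assms quad_form_diag[where N = "n 1" and x = "z 1" and \<alpha> = "- 1" and L = "Lam 1"]
    by (simp add: top_block_def mult.commute)
  also have "\<dots> = (\<Sum>k<n 1. Lam 1 k * (1 - (z 1 k)\<^sup>2)) - \<zeta> + 2 * (\<Sum>c<n d. u c * z d c)"
    by (simp add: algebra_simps sum_subtractf)
  finally show ?thesis .
qed

lemma block_form_layer_block_nonneg:
  fixes z :: "nat \<Rightarrow> nat \<Rightarrow> real"
  assumes "1 \<le> l" "l < d"
    and "\<And>k. k < n (Suc l) \<Longrightarrow> 0 \<le> Lam (Suc l) k"
    and "\<And>k. k < n (Suc l) \<Longrightarrow> a \<le> v k \<and> v k \<le> b"
    and "z (Suc l) = (\<lambda>k. v k * mat_vec (n l) (W l) (z l) k)"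
  shows "0 \<le> block_form n d (layer_block n W a b Lam l) z"
proof -
  let ?y = "mat_vec (n l) (W l) (z l)"
  have term_nonneg: "0 \<le> Lam (Suc l) k * (z (Suc l) k - a * ?y k) * (b * ?y k - z (Suc l) k)"
    if "k < n (Suc l)" for k
    using assms(3,4)[OF that] sector_product_nonneg[of a "v k" b "?y k"] by (simp add: assms(5) mult.assoc)
  have "0 \<le> (\<Sum>k<n (Suc l). Lam (Suc l) k * (z (Suc l) k - a * ?y k) * (b * ?y k - z (Suc l) k))"
    by (rule sum_nonneg) (simp add: term_nonneg)
  then show ?thesis
    unfolding block_form_layer_block[OF assms(1,2)] by simp
qed

text \<open>Block \<open>0\<close> is the homogenising coordinate, paired with the scalar block of \<open>M\<close>.\<close>

fun tangent_vec :: "(nat \<Rightarrow> nat) \<Rightarrow> (nat \<Rightarrow> nat \<Rightarrow> nat \<Rightarrow> real) \<Rightarrow> (nat \<Rightarrow> nat \<Rightarrow> real) \<Rightarrow>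
    (nat \<Rightarrow> real) \<Rightarrow> nat \<Rightarrow> nat \<Rightarrow> real" where
  "tangent_vec n W v s 0 = (\<lambda>_. 1)"
| "tangent_vec n W v s (Suc 0) = s"
| "tangent_vec n W v s (Suc (Suc i)) =
    (\<lambda>k. v (Suc i) k * mat_vec (n (Suc i)) (W (Suc i)) (tangent_vec n W v s (Suc i)) k)"

lemma tangent_vec_Suc:
  "1 \<le> i \<Longrightarrow>
    tangent_vec n W v s (Suc i) = (\<lambda>k. v i k * mat_vec (n i) (W i) (tangent_vec n W v s i) k)"
  by (cases i) auto

lemma back_grad_tangent_vec_adjoint:
  assumes "m < d"
  shows "(\<Sum>c<n (d - m). back_grad d n W v u m c * tangent_vec n W v s (d - m) c)
    = (\<Sum>c<n d. u c * tangent_vec n W v s d c)"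
  using assms
proof (induction m)
  case 0
  then show ?case by simp
next
  case (Suc m)
  define l where "l = d - Suc m"
  have "1 \<le> l" and d_minus_m: "d - m = Suc l"
    using Suc.prems by (auto simp: l_def)
  have "(\<Sum>c<n l. back_grad d n W v u (Suc m) c * tangent_vec n W v s l c)
      = (\<Sum>c<n l. (\<Sum>r<n (Suc l). W l r c * v l r * back_grad d n W v u m r)
          * tangent_vec n W v s l c)"
    by (simp add: d_minus_m l_def)
  also have "\<dots> = (\<Sum>r<n (Suc l).
      back_grad d n W v u m r * (v l r * mat_vec (n l) (W l) (tangent_vec n W v s l) r))"
    by (simp add: mat_vec_def sum_distrib_left sum_distrib_right algebra_simps sum.swap[of _ "{..<n l}"])
  also have "\<dots> = (\<Sum>c<n d. u c * tangent_vec n W v s d c)"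
    using Suc \<open>1 \<le> l\<close> by (simp add: d_minus_m tangent_vec_Suc)
  finally show ?case by (simp add: l_def)
qed

lemma formal_grad_l1_eq_tangent_vec:
  fixes n :: "nat \<Rightarrow> nat" and W :: "nat \<Rightarrow> nat \<Rightarrow> nat \<Rightarrow> real" and v :: "nat \<Rightarrow> nat \<Rightarrow> real"
    and u :: "nat \<Rightarrow> real"
  assumes "1 \<le> d"
  defines "s \<equiv> \<lambda>c. if 0 \<le> back_grad d n W v u (d - 1) c then 1 else - 1"
  shows "formal_grad_l1 d n W v u = (\<Sum>c<n d. u c * tangent_vec n W v s d c)"
proof -
  have "formal_grad_l1 d n W v u = (\<Sum>c<n 1. back_grad d n W v u (d - 1) c * tangent_vec n W v s 1 c)"
    unfolding formal_grad_l1_def by (intro sum.cong) (auto simp: s_def)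
  also have "\<dots> = (\<Sum>c<n d. u c * tangent_vec n W v s d c)"
    using back_grad_tangent_vec_adjoint[of "d - 1" d n W v u s] assms(1) by simp
  finally show ?thesis .
qed

theorem mainTheorem10:
  fixes d :: nat and n :: "nat \<Rightarrow> nat"
    and W :: "nat \<Rightarrow> nat \<Rightarrow> nat \<Rightarrow> real" and u :: "nat \<Rightarrow> real"
    and a b \<zeta> :: real and Lam :: "nat \<Rightarrow> nat \<Rightarrow> real"
  assumes "d \<ge> 2"
    and "\<forall>i\<in>{1..d}. n i \<ge> 1"
    and "a \<le> b"
    and "\<forall>i\<in>{1..d}. \<forall>k<n i. Lam i k \<ge> 0"
    and "neg_semidef (tot_dim n d) (M_mat d n W u a b \<zeta> Lam)"
  shows "\<forall>v :: nat \<Rightarrow> nat \<Rightarrow> real.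
           (\<forall>i\<in>{1..d-1}. \<forall>k<n (Suc i). a \<le> v i k \<and> v i k \<le> b)
           \<longrightarrow> formal_grad_l1 d n W v u \<le> \<zeta> / 2"
proof (intro allI impI)
  fix v :: "nat \<Rightarrow> nat \<Rightarrow> real"
  assume v_range: "\<forall>i\<in>{1..d-1}. \<forall>k<n (Suc i). a \<le> v i k \<and> v i k \<le> b"
  define s where "s = (\<lambda>c. if 0 \<le> back_grad d n W v u (d - 1) c then 1 else - 1 :: real)"
  define z where "z = tangent_vec n W v s"
  have "(z 1 c)\<^sup>2 = 1" for c
    by (simp add: z_def s_def)
  then have "block_form n d (top_block d n u \<zeta> Lam) z = 2 * formal_grad_l1 d n W v u - \<zeta>"
    using assms(1) by (simp add: block_form_top_block formal_grad_l1_eq_tangent_vec z_def s_def)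
  moreover have "0 \<le> block_form n d (layer_block n W a b Lam l) z" if "l \<in> {1..<d}" for l
    using that assms(4) v_range
    by (intro block_form_layer_block_nonneg[where v = "v l"]) (auto simp: z_def tangent_vec_Suc)
  then have "0 \<le> (\<Sum>l\<in>{1..<d}. block_form n d (layer_block n W a b Lam l) z)"
    by (rule sum_nonneg)
  moreover have "block_form n d (M_block d n W u a b \<zeta> Lam) z \<le> 0"
    using assms(5) by (simp add: neg_semidef_imp_block_form_nonpos M_mat_flatten_blocks)
  ultimately show "formal_grad_l1 d n W v u \<le> \<zeta> / 2"
    using block_form_M_block[OF assms(1)] by simp
qed

end
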